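(* Let $\mathcal{S}\subseteq\mathbb{R}^n$, $\mathcal{A}\subseteq\mathbb{R}^m$, let $f:\mathcal{S}\times\mathcal{A}\to\mathbb{R}^n$ satisfy $\|f(\xi,v)-f(\overline{\xi},\overline{v})\|\leqslant L_{f\xi}\|\xi-\overline{\xi}\|+L_{fv}\|v-\overline{v}\|$ for all $\xi,\overline{\xi}\in\mathcal{S}$, $v,\overline{v}\in\mathcal{A}$, and let $g:\mathcal{S}\times\mathcal{A}\to\mathbb{R}$. Let $\Sigma=(\mathcal{S},\mathcal{A},F,g,g)$ be the transition system with $\mathcal{A}(\xi)=\{v\in\mathcal{A}: f(\xi,v)\in\mathcal{S}\}$ and $F(\xi,v)=\{f(\xi,v)\}$ for $v\in\mathcal{A}(\xi)$, and let $\Sigma_{\mathrm{D}}=(\mathcal{S}_{\mathrm{D}},\mathcal{A}_{\mathrm{D}},\Delta,\overline{g},\underline{g})$ be the symbolic model with parameters $\eta,\mu>0$ described in the context. Then the relation $\mathcal{R}$ consisting of all pairs $(s,\xi)\in\mathcal{S}_{\mathrm{D}}\times\mathcal{S}$ with $\xi\in s$ is an alternating simulation relation from $\Sigma_{\mathrm{D}}$ to $\Sigma$, i.e. (1) for every $s\in\mathcal{S}_{\mathrm{D}}$ there is $\xi\in\mathcal{S}$ with $(s,\xi)\in\mathcal{R}$; and (2) for every $(s,\xi)\in\mathcal{R}$ and every $a\in\mathcal{A}_{\mathrm{D}}(s)$ there exists $v\in\mathcal{A}(\xi)$ such that for every $\xi'\in F(\xi,v)$ there exists $s'\in\Delta(s,a)$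 with $(s',\xi')\in\mathcal{R}$.
   Context: $\|\cdot\|$ is the infinity norm and $\mathbb{B}=\{x:\|x\|_\infty\le 1\}$. Symbolic model $\Sigma_{\mathrm{D}}$ with quantization parameters $\eta,\mu>0$: $\mathcal{S}_{\mathrm{D}}$ is a finite partition of $\mathcal{S}$ (ignoring measure-zero overlaps) into hyperrectangular cells $s$ with center $s_c$ and $\|\xi-\overline{\xi}\|\le\eta$ for all $\xi,\overline{\xi}\in s$; $\mathcal{A}_{\mathrm{D}}$ is a finite partition of $\mathcal{A}$ into hyperrectangular cells $a$ with center $a_c$ and $\|v-\overline{v}\|\le\mu$ for all $v,\overline{v}\in a$. Transition relation: $s'\in\Delta(s,a)$ iff $s'\cap\big(f(s_c,a_c)+(L_{f\xi}\eta+L_{fv}\mu)\mathbb{B}\big)\neq\emptyset$. Enabled inputs: $a\in\mathcal{A}_{\mathrm{D}}(s)$ iff $f(s_c,a_c)+(L_{f\xi}\eta+L_{fv}\mu)\mathbb{B}$ is contained in $\mathcal{S}$ (the union of the cells). Rewards: $\overline{g}(s,a)=\max_{\xi\in s}\max_{v\in a}g(\xi,v)$, $\underline{g}(s,a)=\min_{\xi\in s}\min_{v\in a}g(\xi,v)$. *)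

theory Defs
  imports "HOL-Analysis.Analysis"
begin

definition inorm :: "real^'n \<Rightarrow> real" where
  "inorm x = Max (range (\<lambda>i. \<bar>x $ i\<bar>))"

definition inf_ball :: "real^'n \<Rightarrow> real \<Rightarrow> (real^'n) set" where
  "inf_ball c r = {c + r *\<^sub>R x | x. inorm x \<le> 1}"

definition hyperrect :: "(real^'n) set \<Rightarrow> bool" where
  "hyperrect s \<longleftrightarrow> (\<exists>lo hi. (\<forall>i. lo $ i \<le> hi $ i) \<and> s = cbox lo hi)"

definition cell_center :: "(real^'n) set \<Rightarrow> real^'n" where
  "cell_center s = (SOME c. \<exists>lo hi. (\<forall>i. lo $ i \<le> hi $ i) \<and> s = cbox lo hi
                              \<and> c = (1/2) *\<^sub>R (lo + hi))"

definition cell_partition :: "(real^'n) set \<Rightarrow> (real^'n) set set \<Rightarrow> real \<Rightarrow> bool" where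
  "cell_partition X P eps \<longleftrightarrow>
     finite P \<and> \<Union>P = X \<and> (\<forall>s\<in>P. hyperrect s) \<and>
     (\<forall>s\<in>P. \<forall>t\<in>P. s \<noteq> t \<longrightarrow> interior s \<inter> interior t = {}) \<and>
     (\<forall>s\<in>P. \<forall>x\<in>s. \<forall>y\<in>s. inorm (x - y) \<le> eps)"

definition conc_enabled ::
  "(real^'n) set \<Rightarrow> (real^'m) set \<Rightarrow> (real^'n \<Rightarrow> real^'m \<Rightarrow> real^'n) \<Rightarrow> real^'n \<Rightarrow> (real^'m) set" where
  "conc_enabled S A f \<xi> = {v \<in> A. f \<xi> v \<in> S}"

definition conc_post :: "(real^'n \<Rightarrow> real^'m \<Rightarrow> real^'n) \<Rightarrow> real^'n \<Rightarrow> real^'m \<Rightarrow> (real^'n) set" where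
  "conc_post f \<xi> v = {f \<xi> v}"

definition symb_post ::
  "(real^'n) set set \<Rightarrow> (real^'n \<Rightarrow> real^'m \<Rightarrow> real^'n) \<Rightarrow> real \<Rightarrow> real \<Rightarrow> real \<Rightarrow> real
   \<Rightarrow> (real^'n) set \<Rightarrow> (real^'m) set \<Rightarrow> (real^'n) set set" where
  "symb_post SD f Lx Lv \<eta> \<mu> s a =
     {s' \<in> SD. s' \<inter> inf_ball (f (cell_center s) (cell_center a)) (Lx * \<eta> + Lv * \<mu>) \<noteq> {}}"

definition symb_enabled ::
  "(real^'n) set set \<Rightarrow> (real^'m) set set \<Rightarrow> (real^'n \<Rightarrow> real^'m \<Rightarrow> real^'n) \<Rightarrow> real \<Rightarrow> real \<Rightarrow> real \<Rightarrow> real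
   \<Rightarrow> (real^'n) set \<Rightarrow> (real^'m) set set" where
  "symb_enabled SD AD f Lx Lv \<eta> \<mu> s =
     {a \<in> AD. inf_ball (f (cell_center s) (cell_center a)) (Lx * \<eta> + Lv * \<mu>) \<subseteq> \<Union>SD}"

text \<open>Rewards of the symbolic model (not used by the simulation statement).\<close>
definition g_upper where
  "g_upper (g :: real^'n \<Rightarrow> real^'m \<Rightarrow> real) s a = (SUP \<xi>\<in>s. SUP v\<in>a. g \<xi> v)"
definition g_lower where
  "g_lower (g :: real^'n \<Rightarrow> real^'m \<Rightarrow> real) s a = (INF \<xi>\<in>s. INF v\<in>a. g \<xi> v)"

end

theory Submission
  imports Defs
begin

text \<open>The concrete input is the centre of the symbolic input cell. Since every point of a cell
  is within its diameter of the cell centre, the Lipschitz bound places the successor of any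
  state in the cell inside the enlarged ball around the nominal successor of the two centres.
  Enabledness of the symbolic input puts that ball inside the state space, so the concrete
  input is enabled, and the cell containing the successor is a symbolic successor.\<close>

lemma inorm_le_iff: "inorm (x::real^'n) \<le> r \<longleftrightarrow> (\<forall>i. \<bar>x $ i\<bar> \<le> r)"
  unfolding inorm_def by (subst Max_le_iff) auto

lemma inorm_zero [simp]: "inorm (0::real^'n) = 0"
  unfolding inorm_def by simp

lemma mem_inf_ballI:
  assumes "inorm (y - c) \<le> r" and "0 \<le> r"
  shows "y \<in> inf_ball c r"
proof (cases "r = 0")
  case True
  then have "y = c"
    using assms(1) by (simp add: inorm_le_iff vec_eq_iff)
  then show ?thesis
    unfolding inf_ball_def by (auto intro!: exI[of _ 0])
next
  case False
  with assms(2) have "r > 0" by simp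
  then have "inorm ((1/r) *\<^sub>R (y - c)) \<le> 1" and "y = c + r *\<^sub>R ((1/r) *\<^sub>R (y - c))"
    using assms(1) by (auto simp: inorm_le_iff abs_mult divide_simps)
  then show ?thesis
    unfolding inf_ball_def by blast
qed

lemma cell_center_mem:
  assumes "hyperrect s"
  shows "cell_center s \<in> s"
proof -
  have "\<exists>c lo hi. (\<forall>i. lo $ i \<le> hi $ i) \<and> s = cbox lo hi \<and> c = (1/2) *\<^sub>R (lo + hi)"
    using assms unfolding hyperrect_def by blast
  from someI_ex[OF this] obtain lo hi where
    "\<forall>i. lo $ i \<le> hi $ i" "s = cbox lo hi" "cell_center s = (1/2) *\<^sub>R (lo + hi)"
    unfolding cell_center_def by blast
  then show ?thesis
    by (auto simp: mem_box_cart field_simps)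
qed

lemma cell_partition_center_mem:
  assumes "cell_partition X P eps" and "s \<in> P"
  shows "cell_center s \<in> s"
  using assms by (intro cell_center_mem) (simp add: cell_partition_def)

lemma cell_partition_subset:
  assumes "cell_partition X P eps" and "s \<in> P"
  shows "s \<subseteq> X"
  using assms unfolding cell_partition_def by (metis Union_upper)

lemma cell_partition_dist_center:
  assumes "cell_partition X P eps" and "s \<in> P" and "x \<in> s"
  shows "inorm (x - cell_center s) \<le> eps"
proof -
  have "\<forall>x\<in>s. \<forall>y\<in>s. inorm (x - y) \<le> eps"
    using assms(1,2) unfolding cell_partition_def by simp
  then show ?thesis
    using assms(3) cell_partition_center_mem[OF assms(1,2)] by blast
qed

lemma lipschitz_mem_inf_ball:
  fixes f :: "real^'n \<Rightarrow> real^'m \<Rightarrow> real^'k"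
  assumes lip: "\<forall>\<xi>\<in>S. \<forall>\<xi>b\<in>S. \<forall>v\<in>A. \<forall>vb\<in>A.
                  inorm (f \<xi> v - f \<xi>b vb) \<le> Lx * inorm (\<xi> - \<xi>b) + Lv * inorm (v - vb)"
    and "0 \<le> Lx" "0 \<le> Lv" "0 \<le> \<eta>" "0 \<le> \<mu>"
    and "\<xi> \<in> S" "c \<in> S" "v \<in> A" "d \<in> A"
    and "inorm (\<xi> - c) \<le> \<eta>" "inorm (v - d) \<le> \<mu>"
  shows "f \<xi> v \<in> inf_ball (f c d) (Lx * \<eta> + Lv * \<mu>)"
proof (rule mem_inf_ballI)
  have "inorm (f \<xi> v - f c d) \<le> Lx * inorm (\<xi> - c) + Lv * inorm (v - d)"
    using lip assms(6-9) by blast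
  also have "\<dots> \<le> Lx * \<eta> + Lv * \<mu>"
    using assms by (intro add_mono mult_left_mono) auto
  finally show "inorm (f \<xi> v - f c d) \<le> Lx * \<eta> + Lv * \<mu>" .
  show "0 \<le> Lx * \<eta> + Lv * \<mu>"
    using assms(2-5) by simp
qed

theorem proposition1:
  fixes S :: "(real^'n) set" and A :: "(real^'m) set"
    and f :: "real^'n \<Rightarrow> real^'m \<Rightarrow> real^'n"
    and Lx Lv \<eta> \<mu> :: real
    and SD :: "(real^'n) set set" and AD :: "(real^'m) set set"
  assumes lip: "\<forall>\<xi>\<in>S. \<forall>\<xi>b\<in>S. \<forall>v\<in>A. \<forall>vb\<in>A.
                  inorm (f \<xi> v - f \<xi>b vb) \<le> Lx * inorm (\<xi> - \<xi>b) + Lv * inorm (v - vb)"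
    and Lx_nonneg: "0 \<le> Lx" and Lv_nonneg: "0 \<le> Lv"
    and eta_pos: "0 < \<eta>" and mu_pos: "0 < \<mu>"
    and SD_part: "cell_partition S SD \<eta>"
    and AD_part: "cell_partition A AD \<mu>"
  shows "(\<forall>s\<in>SD. \<exists>\<xi>\<in>S. \<xi> \<in> s) \<and>
         (\<forall>s\<in>SD. \<forall>\<xi>\<in>S. \<xi> \<in> s \<longrightarrow>
            (\<forall>a\<in>symb_enabled SD AD f Lx Lv \<eta> \<mu> s.
               \<exists>v\<in>conc_enabled S A f \<xi>. \<forall>\<xi>'\<in>conc_post f \<xi> v.
                  \<exists>s'\<in>symb_post SD f Lx Lv \<eta> \<mu> s a. \<xi>' \<in> s'))"
proof (intro conjI ballI impI)
  fix s assume "s \<in> SD"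
  then show "\<exists>\<xi>\<in>S. \<xi> \<in> s"
    using SD_part cell_partition_center_mem cell_partition_subset by blast
next
  fix s \<xi> a assume s: "s \<in> SD" and "\<xi> \<in> S" "\<xi> \<in> s"
    and a: "a \<in> symb_enabled SD AD f Lx Lv \<eta> \<mu> s"
  let ?ball = "inf_ball (f (cell_center s) (cell_center a)) (Lx * \<eta> + Lv * \<mu>)"
  have SD_cover: "\<Union>SD = S"
    using SD_part by (simp add: cell_partition_def)
  have "a \<in> AD" and ball_sub: "?ball \<subseteq> S"
    using a SD_cover unfolding symb_enabled_def by auto
  then have center_a: "cell_center a \<in> A"
    using AD_part cell_partition_center_mem cell_partition_subset by blast
  have "cell_center s \<in> S"
    using cell_partition_center_mem[OF SD_part s] cell_partition_subset[OF SD_part s] by blast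
  then have succ_ball: "f \<xi> (cell_center a) \<in> ?ball"
    using lipschitz_mem_inf_ball[OF lip Lx_nonneg Lv_nonneg _ _ \<open>\<xi> \<in> S\<close> _ center_a center_a
        cell_partition_dist_center[OF SD_part s \<open>\<xi> \<in> s\<close>]] eta_pos mu_pos
    by simp
  then obtain s' where "s' \<in> SD" "f \<xi> (cell_center a) \<in> s'"
    using ball_sub SD_cover by blast
  moreover have "cell_center a \<in> conc_enabled S A f \<xi>"
    using center_a succ_ball ball_sub unfolding conc_enabled_def by blast
  ultimately show "\<exists>v\<in>conc_enabled S A f \<xi>. \<forall>\<xi>'\<in>conc_post f \<xi> v.
                     \<exists>s'\<in>symb_post SD f Lx Lv \<eta> \<mu> s a. \<xi>' \<in> s'"
    using succ_ball unfolding conc_post_def symb_post_def by blast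
qed

end
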